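(* Let $\langle A,C,d,O,v,(\prec_a)_{a\in A}\rangle$ be an infinite sequential game with $C$ finite, let $a\in A$, and assume: (1) $\prec_a$ is a strict weak order; (2) for every play $p\in C^\omega$, every increasing $\varphi:\mathbb{N}\to\mathbb{N}$ and every sequence $(s_n)_{n\in\mathbb{N}}$ of strategies of player $a$, if $g_a(p_{<\varphi(n+1)},s_{n+1})\subsetneq g_a(p_{<\varphi(n)},s_n)$ for all $n\in\mathbb{N}$, then $v(p)\in\bigcap_{n\in\mathbb{N}}g_a(p_{<\varphi(n)},s_n)$. Then for every $\gamma\in C^*$ there exists a strategy $s$ of player $a$ such that $g_a(\gamma,s)=G_a(\gamma)$.
   Context: An infinite sequential game $\langle A,C,d,O,v,(\prec_a)_{a\in A}\rangle$ consists of a non-empty set of agents $A$, a non-empty set of choices $C$, $d:C^*\to A$ (the agent choosing after each finite history), a non-empty set of outcomes $O$, $v:C^\omega\to O$, and binary relations $\prec_a$ on $O$ (preferences). A strategy of $a$ is a function $s:d^{-1}(\{a\})\to C$. For a partial function $t:\subseteq C^*\to C$, let $P(t)$ be the set of plays $p(\sigma)$ (where $p_n=\sigma(p_{<n})$) over all total $\sigma:C^*\to C$ extending $t$. For $\gamma\in C^*$ and a strategy $s$ of $a$, let $s|_{\gamma}$ be the restriction of $s$ to histories in $d^{-1}(\{a\})$ extending $\gamma$, and define the guarantee $g_a(\gamma,s):=\{o\in O\mid\exists p\in P(s|_\gamma)\cap\gamma C^\omega,\ \neg(o\prec_a v(p))\}$ and the best guarantee $G_a(\gamma):=\bigcap_s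 g_a(\gamma,s)$ (intersection over all strategies $s$ of $a$). $p_{<n}$ denotes the length-$n$ prefix of $p$. A strict weak order is an irreflexive, transitive relation $\prec$ such that $\neg(x\prec y)\wedge\neg(y\prec z)$ implies $\neg(x\prec z)$. *)

theory Defs
  imports Main "HOL-Library.Sublist"
begin

text \<open>Choices are the elements of type 'c, agents of type 'a, outcomes of type 'o.\<close>

definition strict_weak_order :: "('o \<Rightarrow> 'o \<Rightarrow> bool) \<Rightarrow> bool" where
  "strict_weak_order r \<longleftrightarrow> (\<forall>x. \<not> r x x) \<and> (\<forall>x y z. r x y \<and> r y z \<longrightarrow> r x z)
     \<and> (\<forall>x y z. \<not> r x y \<and> \<not> r y z \<longrightarrow> \<not> r x z)"

definition pref :: "(nat \<Rightarrow> 'c) \<Rightarrow> nat \<Rightarrow> 'c list" where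
  "pref p n = map p [0..<n]"

definition is_strategy :: "('c list \<Rightarrow> 'a) \<Rightarrow> 'a \<Rightarrow> ('c list \<rightharpoonup> 'c) \<Rightarrow> bool" where
  "is_strategy d a s \<longleftrightarrow> dom s = {h. d h = a}"

text \<open>P(t): plays induced by total extensions of the partial function t\<close>
definition plays :: "('c list \<rightharpoonup> 'c) \<Rightarrow> (nat \<Rightarrow> 'c) set" where
  "plays t = {p. \<exists>\<sigma>::'c list \<Rightarrow> 'c. (\<forall>h \<in> dom t. t h = Some (\<sigma> h)) \<and>
                   (\<forall>n. p n = \<sigma> (pref p n))}"

definition restr :: "('c list \<rightharpoonup> 'c) \<Rightarrow> 'c list \<Rightarrow> ('c list \<rightharpoonup> 'c)" where
  "restr s \<gamma> = (\<lambda>h. if prefix \<gamma> h then s h else None)"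

definition guarantee :: "((nat \<Rightarrow> 'c) \<Rightarrow> 'o) \<Rightarrow> ('a \<Rightarrow> 'o \<Rightarrow> 'o \<Rightarrow> bool) \<Rightarrow> 'a
    \<Rightarrow> 'c list \<Rightarrow> ('c list \<rightharpoonup> 'c) \<Rightarrow> 'o set" where
  "guarantee v prec a \<gamma> s =
     {x. \<exists>p \<in> plays (restr s \<gamma>). pref p (length \<gamma>) = \<gamma> \<and> \<not> prec a x (v p)}"

definition best_guarantee :: "('c list \<Rightarrow> 'a) \<Rightarrow> ((nat \<Rightarrow> 'c) \<Rightarrow> 'o) \<Rightarrow> ('a \<Rightarrow> 'o \<Rightarrow> 'o \<Rightarrow> bool)
    \<Rightarrow> 'a \<Rightarrow> 'c list \<Rightarrow> 'o set" where
  "best_guarantee d v prec a \<gamma> = (\<Inter>s \<in> {s. is_strategy d a s}. guarantee v prec a \<gamma> s)"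

end

theory Submission
  imports Defs
begin

text \<open>Guarantees and best guarantees are up-sets of the weak order of player a, hence any two
  of them are comparable. As C is finite, every history h has a child h\<cdot>c with
  G(h\<cdot>c) \<subseteq> G(h): at the player's own histories take the child with the least best guarantee.
  The strategy makes such descent choices until the play reaches a history at which G is attained
  by some strategy, and then switches to that strategy. A play that reaches such a history has
  its outcome in G there, hence in G(\<gamma>). Along a play that never does, every guarantee strictly
  exceeds the best one, so starting from an arbitrary strategy t one can choose strategies whose
  guarantees strictly decrease along the play; the limit hypothesis then puts the outcome into
  g(\<gamma>, t) for every t, that is, into G(\<gamma>).\<close>

lemma length_pref [simp]: "length (pref p n) = n"
  by (simp add: pref_def)

lemma pref_Suc: "pref p (Suc n) = pref p n @ [p n]"
  by (simp add: pref_def)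

lemma take_pref: "m \<le> n \<Longrightarrow> take m (pref p n) = pref p m"
  by (simp add: pref_def take_map min_def)

lemma prefix_pref_iff:
  assumes "pref p (length h) = h"
  shows "prefix h (pref p n) \<longleftrightarrow> length h \<le> n"
proof
  show "prefix h (pref p n) \<Longrightarrow> length h \<le> n"
    using prefix_length_le by fastforce
  show "length h \<le> n \<Longrightarrow> prefix h (pref p n)"
    using assms take_is_prefix take_pref by metis
qed

definition follows :: "('c list \<rightharpoonup> 'c) \<Rightarrow> (nat \<Rightarrow> 'c) \<Rightarrow> nat \<Rightarrow> bool" where
  "follows s p n \<longleftrightarrow> (\<forall>m\<ge>n. pref p m \<in> dom s \<longrightarrow> s (pref p m) = Some (p m))"

lemma plays_iff_follows: "p \<in> plays t \<longleftrightarrow> follows t p 0"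
proof
  assume "p \<in> plays t"
  then obtain \<sigma> where "\<forall>h\<in>dom t. t h = Some (\<sigma> h)" "\<forall>n. p n = \<sigma> (pref p n)"
    by (auto simp: plays_def)
  then show "follows t p 0"
    by (simp add: follows_def)
next
  assume follows: "follows t p 0"
  define \<sigma> where "\<sigma> h = (case t h of Some c \<Rightarrow> c | None \<Rightarrow> p (length h))" for h
  have "\<forall>h\<in>dom t. t h = Some (\<sigma> h)" "\<forall>n. p n = \<sigma> (pref p n)"
    using follows by (auto simp: \<sigma>_def follows_def split: option.split)
  then show "p \<in> plays t"
    unfolding plays_def by blast
qed

lemma mem_guarantee_iff:
  "x \<in> guarantee v prec a h s \<longleftrightarrow>
     (\<exists>p. pref p (length h) = h \<and> follows s p (length h) \<and> \<not> prec a x (v p))"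
proof -
  have "p \<in> plays (restr s h) \<longleftrightarrow> follows s p (length h)" if "pref p (length h) = h" for p
    using prefix_pref_iff[OF that]
    by (auto simp: plays_iff_follows follows_def restr_def dom_def)
  then show ?thesis
    unfolding guarantee_def by blast
qed

lemma guarantee_append_subset:
  assumes "h \<in> dom s \<Longrightarrow> s h = Some c"
  shows "guarantee v prec a (h @ [c]) s \<subseteq> guarantee v prec a h s"
proof
  fix x
  assume "x \<in> guarantee v prec a (h @ [c]) s"
  then obtain p where p: "pref p (Suc (length h)) = h @ [c]" "follows s p (Suc (length h))"
    and x: "\<not> prec a x (v p)"
    by (auto simp: mem_guarantee_iff)
  then have "pref p (length h) = h" "p (length h) = c"
    by (auto simp: pref_Suc)
  moreover have "follows s p (length h)"
    unfolding follows_def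
  proof (intro allI impI)
    fix m
    assume "length h \<le> m" "pref p m \<in> dom s"
    with p(2) \<open>pref p (length h) = h\<close> \<open>p (length h) = c\<close> assms
    show "s (pref p m) = Some (p m)"
      by (cases "m = length h") (auto simp: follows_def)
  qed
  ultimately show "x \<in> guarantee v prec a h s"
    using x by (auto simp: mem_guarantee_iff)
qed

definition upward_closed :: "('o \<Rightarrow> 'o \<Rightarrow> bool) \<Rightarrow> 'o set \<Rightarrow> bool" where
  "upward_closed r U \<longleftrightarrow> (\<forall>x y. x \<in> U \<longrightarrow> \<not> r y x \<longrightarrow> y \<in> U)"

lemma upward_closed_subset_total:
  assumes "strict_weak_order r" "upward_closed r U" "upward_closed r V"
  shows "U \<subseteq> V \<or> V \<subseteq> U"
proof (rule ccontr)
  assume "\<not> (U \<subseteq> V \<or> V \<subseteq> U)"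
  then obtain x y where "x \<in> U" "x \<notin> V" "y \<in> V" "y \<notin> U"
    by blast
  moreover have "\<not> r y x \<or> \<not> r x y"
    using assms(1) unfolding strict_weak_order_def by blast
  ultimately show False
    using assms(2,3) unfolding upward_closed_def by blast
qed

lemma antimono_le_by_Suc:
  fixes f :: "nat \<Rightarrow> 'b::order"
  assumes "\<And>m. k \<le> m \<Longrightarrow> m < N \<Longrightarrow> f (Suc m) \<le> f m" and "k \<le> N"
  shows "f N \<le> f k"
  using assms(2,1)
proof (induction N rule: dec_induct)
  case (step N)
  then have "f (Suc N) \<le> f N" "f N \<le> f k"
    by simp_all
  then show ?case
    by (rule order_trans)
qed simp

locale weakly_ordered_player =
  fixes d :: "'c list \<Rightarrow> 'a" and v :: "(nat \<Rightarrow> 'c) \<Rightarrow> 'o"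
    and prec :: "'a \<Rightarrow> 'o \<Rightarrow> 'o \<Rightarrow> bool" and a :: 'a
  assumes swo: "strict_weak_order (prec a)"
begin

abbreviation g :: "'c list \<Rightarrow> ('c list \<rightharpoonup> 'c) \<Rightarrow> 'o set" where
  "g \<equiv> guarantee v prec a"

abbreviation G :: "'c list \<Rightarrow> 'o set" where
  "G \<equiv> best_guarantee d v prec a"

lemma not_prec_trans: "\<not> prec a x z \<Longrightarrow> \<not> prec a y x \<Longrightarrow> \<not> prec a y z"
  using swo unfolding strict_weak_order_def by blast

lemma upward_closed_guarantee: "upward_closed (prec a) (g h s)"
  using not_prec_trans unfolding upward_closed_def guarantee_def by blast

lemma upward_closed_best_guarantee: "upward_closed (prec a) (G h)"
  using upward_closed_guarantee unfolding upward_closed_def best_guarantee_def by blast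

lemma best_guarantee_subset: "is_strategy d a s \<Longrightarrow> G h \<subseteq> g h s"
  by (auto simp: best_guarantee_def)

lemma outcome_in_guarantee:
  assumes "follows s p n"
  shows "v p \<in> g (pref p n) s"
proof -
  have "\<not> prec a (v p) (v p)"
    using swo unfolding strict_weak_order_def by blast
  with assms show ?thesis
    unfolding mem_guarantee_iff by auto
qed

lemma guarantee_subset_if_outcomes:
  assumes "\<And>p. pref p (length h) = h \<Longrightarrow> follows s p (length h) \<Longrightarrow> v p \<in> U"
    and "upward_closed (prec a) U"
  shows "g h s \<subseteq> U"
proof
  fix x
  assume "x \<in> g h s"
  then obtain p where "pref p (length h) = h" "follows s p (length h)" "\<not> prec a x (v p)"
    by (auto simp: mem_guarantee_iff)
  with assms show "x \<in> U"
    unfolding upward_closed_def by blast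
qed

lemma best_guarantee_append_subset_other:
  assumes "d h \<noteq> a"
  shows "G (h @ [c]) \<subseteq> G h"
proof -
  have "G (h @ [c]) \<subseteq> g h s" if "is_strategy d a s" for s
  proof -
    have "G (h @ [c]) \<subseteq> g (h @ [c]) s"
      using that by (rule best_guarantee_subset)
    also have "\<dots> \<subseteq> g h s"
      using assms that by (intro guarantee_append_subset) (auto simp: is_strategy_def)
    finally show ?thesis .
  qed
  then show ?thesis
    by (auto simp: best_guarantee_def)
qed

lemma ex_best_guarantee_append_subset:
  assumes "finite (UNIV :: 'c set)"
  shows "\<exists>c. G (h @ [c]) \<subseteq> G h"
proof (cases "d h = a")
  case True
  let ?F = "range (\<lambda>c. G (h @ [c]))"
  have "subset.chain UNIV ?F"
    using upward_closed_subset_total[OF swo upward_closed_best_guarantee upward_closed_best_guarantee]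
    unfolding subset.chain_def by blast
  with assms have "\<Inter>?F \<in> ?F"
    by (intro Inter_in_chain) auto
  then obtain c where c: "\<And>c'. G (h @ [c]) \<subseteq> G (h @ [c'])"
    by auto
  have "G (h @ [c]) \<subseteq> g h s" if "is_strategy d a s" for s
  proof -
    from that True obtain c' where c': "s h = Some c'"
      by (auto simp: is_strategy_def)
    have "G (h @ [c]) \<subseteq> G (h @ [c'])"
      by (rule c)
    also have "\<dots> \<subseteq> g (h @ [c']) s"
      using that by (rule best_guarantee_subset)
    also have "\<dots> \<subseteq> g h s"
      using c' by (intro guarantee_append_subset) simp
    finally show ?thesis .
  qed
  then show ?thesis
    by (auto simp: best_guarantee_def)
qed (use best_guarantee_append_subset_other in blast)

definition attained :: "'c list \<Rightarrow> bool" where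
  "attained h \<longleftrightarrow> (\<exists>s. is_strategy d a s \<and> g h s = G h)"

lemma ex_strategy_guarantee_psubset:
  assumes "\<not> attained h" and "G h' \<subseteq> G h" and u: "is_strategy d a u"
  shows "\<exists>s. is_strategy d a s \<and> g h' s \<subset> g h u"
proof -
  have "G h \<noteq> g h u"
    using assms(1) u unfolding attained_def by blast
  with best_guarantee_subset[OF u] obtain y where y: "y \<in> g h u" "y \<notin> G h"
    by blast
  with assms(2) obtain s where s: "is_strategy d a s" "y \<notin> g h' s"
    unfolding best_guarantee_def by blast
  have "g h' s \<subseteq> g h u \<or> g h u \<subseteq> g h' s"
    by (rule upward_closed_subset_total[OF swo upward_closed_guarantee upward_closed_guarantee])
  with y s show ?thesis
    by blast
qed

lemma outcome_in_best_guarantee_if_unattained: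
  assumes limit: "\<And>ss. \<forall>n. is_strategy d a (ss n) \<Longrightarrow>
      \<forall>n. g (pref p (k + Suc n)) (ss (Suc n)) \<subset> g (pref p (k + n)) (ss n) \<Longrightarrow>
      v p \<in> g (pref p k) (ss 0)"
    and descending: "\<And>n. k \<le> n \<Longrightarrow> G (pref p (Suc n)) \<subseteq> G (pref p n)"
    and unattained: "\<And>n. k \<le> n \<Longrightarrow> \<not> attained (pref p n)"
  shows "v p \<in> G (pref p k)"
proof -
  have "v p \<in> g (pref p k) t" if t: "is_strategy d a t" for t
  proof -
    have "\<exists>ss. \<forall>n. (is_strategy d a (ss n) \<and> (n = 0 \<longrightarrow> ss n = t)) \<and>
        g (pref p (k + Suc n)) (ss (Suc n)) \<subset> g (pref p (k + n)) (ss n)"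
    proof (rule dependent_nat_choice[where P = "\<lambda>n s. is_strategy d a s \<and> (n = 0 \<longrightarrow> s = t)"
          and Q = "\<lambda>n u s. g (pref p (k + Suc n)) s \<subset> g (pref p (k + n)) u"])
      fix u and n :: nat
      assume "is_strategy d a u \<and> (n = 0 \<longrightarrow> u = t)"
      moreover have "\<not> attained (pref p (k + n))" "G (pref p (k + Suc n)) \<subseteq> G (pref p (k + n))"
        using unattained descending by simp_all
      ultimately obtain s where "is_strategy d a s" "g (pref p (k + Suc n)) s \<subset> g (pref p (k + n)) u"
        using ex_strategy_guarantee_psubset by blast
      then show "\<exists>s. (is_strategy d a s \<and> (Suc n = 0 \<longrightarrow> s = t)) \<and>
          g (pref p (k + Suc n)) s \<subset> g (pref p (k + n)) u"
        by blast
    qed (use t in simp)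
    then obtain ss where ss: "\<forall>n. (is_strategy d a (ss n) \<and> (n = 0 \<longrightarrow> ss n = t)) \<and>
        g (pref p (k + Suc n)) (ss (Suc n)) \<subset> g (pref p (k + n)) (ss n)"
      by blast
    then have "v p \<in> g (pref p k) (ss 0)"
      by (intro limit) simp_all
    with ss show ?thesis
      by simp
  qed
  then show ?thesis
    by (simp add: best_guarantee_def)
qed

definition optimal :: "'c list \<Rightarrow> ('c list \<rightharpoonup> 'c)" where
  "optimal h = (SOME s. is_strategy d a s \<and> g h s = G h)"

definition descent_choice :: "'c list \<Rightarrow> 'c" where
  "descent_choice h = (SOME c. G (h @ [c]) \<subseteq> G h)"

definition attained_prefix :: "nat \<Rightarrow> 'c list \<Rightarrow> nat \<Rightarrow> bool" where
  "attained_prefix k h n \<longleftrightarrow> k \<le> n \<and> n \<le> length h \<and> attained (take n h)"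

definition switching_strategy :: "nat \<Rightarrow> ('c list \<rightharpoonup> 'c)" where
  "switching_strategy k h =
     (if d h \<noteq> a then None
      else if \<exists>n. attained_prefix k h n then optimal (take (LEAST n. attained_prefix k h n) h) h
      else Some (descent_choice h))"

lemma optimal_attains:
  assumes "attained h"
  shows "is_strategy d a (optimal h)" and "g h (optimal h) = G h"
proof -
  from assms have "is_strategy d a (optimal h) \<and> g h (optimal h) = G h"
    unfolding attained_def optimal_def by (rule someI_ex)
  then show "is_strategy d a (optimal h)" and "g h (optimal h) = G h"
    by simp_all
qed

lemma best_guarantee_append_descent_choice:
  "finite (UNIV :: 'c set) \<Longrightarrow> G (h @ [descent_choice h]) \<subseteq> G h"
  unfolding descent_choice_def by (rule someI_ex) (rule ex_best_guarantee_append_subset)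

lemma attained_prefix_pref:
  "attained_prefix k (pref p m) n \<longleftrightarrow> k \<le> n \<and> n \<le> m \<and> attained (pref p n)"
  by (auto simp: attained_prefix_def take_pref)

lemma switching_strategy_other: "d h \<noteq> a \<Longrightarrow> switching_strategy k h = None"
  unfolding switching_strategy_def by simp

lemma switching_strategy_attained:
  "d h = a \<Longrightarrow> attained_prefix k h n \<Longrightarrow>
     switching_strategy k h = optimal (take (LEAST n. attained_prefix k h n) h) h"
  unfolding switching_strategy_def by auto

lemma switching_strategy_unattained:
  "d h = a \<Longrightarrow> (\<And>n. \<not> attained_prefix k h n) \<Longrightarrow>
     switching_strategy k h = Some (descent_choice h)"
  unfolding switching_strategy_def by auto

lemma is_strategy_switching_strategy: "is_strategy d a (switching_strategy k)"
proof -
  have "switching_strategy k h \<noteq> None" if "d h = a" for h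
  proof (cases "\<exists>n. attained_prefix k h n")
    case True
    then obtain n where n: "attained_prefix k h n"
      by blast
    then have "attained (take (LEAST n. attained_prefix k h n) h)"
      by (metis LeastI attained_prefix_def)
    with that have "h \<in> dom (optimal (take (LEAST n. attained_prefix k h n) h))"
      using optimal_attains(1) unfolding is_strategy_def by blast
    then show ?thesis
      using switching_strategy_attained[OF that n] by auto
  next
    case False
    with that show ?thesis
      by (simp add: switching_strategy_unattained)
  qed
  then show ?thesis
    unfolding is_strategy_def using switching_strategy_other by fastforce
qed

lemma follows_switching_strategy:
  assumes "follows (switching_strategy k) p k" and "k \<le> m" and "d (pref p m) = a"
  shows "switching_strategy k (pref p m) = Some (p m)"
  using assms is_strategy_switching_strategy unfolding follows_def is_strategy_def by auto

lemma switching_strategy_descends: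
  assumes fin: "finite (UNIV :: 'c set)" and follows: "follows (switching_strategy k) p k"
    and "k \<le> m" and unattained: "\<And>n. k \<le> n \<Longrightarrow> n \<le> m \<Longrightarrow> \<not> attained (pref p n)"
  shows "G (pref p (Suc m)) \<subseteq> G (pref p m)"
proof (cases "d (pref p m) = a")
  case True
  moreover have "\<not> attained_prefix k (pref p m) n" for n
    using unattained by (auto simp: attained_prefix_pref)
  ultimately have "switching_strategy k (pref p m) = Some (descent_choice (pref p m))"
    by (rule switching_strategy_unattained)
  with follows_switching_strategy[OF follows \<open>k \<le> m\<close> True]
  have "p m = descent_choice (pref p m)"
    by simp
  then show ?thesis
    using best_guarantee_append_descent_choice[OF fin] by (simp add: pref_Suc)
next
  case False
  then show ?thesis
    unfolding pref_Suc by (rule best_guarantee_append_subset_other)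
qed

lemma switching_strategy_follows_optimal:
  assumes follows: "follows (switching_strategy k) p k"
    and n0: "k \<le> n0" "attained (pref p n0)"
    and before: "\<And>n. k \<le> n \<Longrightarrow> n < n0 \<Longrightarrow> \<not> attained (pref p n)"
  shows "follows (optimal (pref p n0)) p n0"
  unfolding follows_def
proof (intro allI impI)
  fix m
  assume m: "n0 \<le> m" "pref p m \<in> dom (optimal (pref p n0))"
  then have "d (pref p m) = a"
    using optimal_attains(1)[OF n0(2)] by (auto simp: is_strategy_def)
  moreover have "(LEAST n. attained_prefix k (pref p m) n) = n0"
  proof (rule Least_equality)
    show "attained_prefix k (pref p m) n0"
      using n0 m by (simp add: attained_prefix_pref)
    show "n0 \<le> n" if "attained_prefix k (pref p m) n" for n
      using that before not_le by (auto simp: attained_prefix_pref)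
  qed
  moreover have "attained_prefix k (pref p m) n0"
    using n0 m by (simp add: attained_prefix_pref)
  ultimately have "switching_strategy k (pref p m) = optimal (pref p n0) (pref p m)"
    using m by (simp add: switching_strategy_attained take_pref)
  with follows_switching_strategy[OF follows _ \<open>d (pref p m) = a\<close>] n0 m
  show "optimal (pref p n0) (pref p m) = Some (p m)"
    by simp
qed

lemma outcome_in_best_guarantee_switching:
  assumes fin: "finite (UNIV :: 'c set)"
    and limit: "\<And>ss. \<forall>n. is_strategy d a (ss n) \<Longrightarrow>
      \<forall>n. g (pref p (k + Suc n)) (ss (Suc n)) \<subset> g (pref p (k + n)) (ss n) \<Longrightarrow>
      v p \<in> g (pref p k) (ss 0)"
    and follows: "follows (switching_strategy k) p k"
  shows "v p \<in> G (pref p k)"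
proof (cases "\<exists>n. k \<le> n \<and> attained (pref p n)")
  case True
  define n0 where "n0 = (LEAST n. k \<le> n \<and> attained (pref p n))"
  have n0: "k \<le> n0" "attained (pref p n0)"
    using LeastI_ex[OF True] unfolding n0_def by blast+
  have before: "\<not> attained (pref p n)" if "k \<le> n" "n < n0" for n
    using not_less_Least[of n "\<lambda>n. k \<le> n \<and> attained (pref p n)"] that unfolding n0_def by blast
  have "v p \<in> g (pref p n0) (optimal (pref p n0))"
    by (rule outcome_in_guarantee[OF switching_strategy_follows_optimal[OF follows n0 before]])
  also have "\<dots> = G (pref p n0)"
    by (rule optimal_attains(2)[OF n0(2)])
  also have "\<dots> \<subseteq> G (pref p k)"
  proof (rule antimono_le_by_Suc[where f = "\<lambda>n. G (pref p n)", OF _ n0(1)])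
    fix m
    assume "k \<le> m" "m < n0"
    then show "G (pref p (Suc m)) \<subseteq> G (pref p m)"
      by (intro switching_strategy_descends[OF fin follows]) (simp_all add: before)
  qed
  finally show ?thesis .
next
  case False
  then have unattained: "\<not> attained (pref p n)" if "k \<le> n" for n
    using that by blast
  have descending: "G (pref p (Suc n)) \<subseteq> G (pref p n)" if "k \<le> n" for n
    using that by (intro switching_strategy_descends[OF fin follows]) (simp_all add: unattained)
  from limit descending unattained show ?thesis
    by (rule outcome_in_best_guarantee_if_unattained)
qed

theorem ex_strategy_attaining_best_guarantee:
  assumes fin: "finite (UNIV :: 'c set)"
    and limit: "\<And>p k ss. \<forall>n. is_strategy d a (ss n) \<Longrightarrow>
      \<forall>n. g (pref p (k + Suc n)) (ss (Suc n)) \<subset> g (pref p (k + n)) (ss n) \<Longrightarrow>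
      v p \<in> g (pref p k) (ss 0)"
  shows "\<exists>s. is_strategy d a s \<and> g \<gamma> s = G \<gamma>"
proof (intro exI conjI)
  let ?s = "switching_strategy (length \<gamma>)"
  show "is_strategy d a ?s"
    by (rule is_strategy_switching_strategy)
  show "g \<gamma> ?s = G \<gamma>"
  proof
    have "v p \<in> G \<gamma>" if "pref p (length \<gamma>) = \<gamma>" "follows ?s p (length \<gamma>)" for p
    proof -
      have "v p \<in> G (pref p (length \<gamma>))"
        by (rule outcome_in_best_guarantee_switching[OF fin _ that(2)]) (rule limit)
      with that(1) show ?thesis
        by simp
    qed
    then show "g \<gamma> ?s \<subseteq> G \<gamma>"
      by (rule guarantee_subset_if_outcomes[OF _ upward_closed_best_guarantee])
    show "G \<gamma> \<subseteq> g \<gamma> ?s"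
      by (rule best_guarantee_subset[OF is_strategy_switching_strategy])
  qed
qed

end

theorem lemma20:
  fixes d :: "'c list \<Rightarrow> 'a" and v :: "(nat \<Rightarrow> 'c) \<Rightarrow> 'o"
    and prec :: "'a \<Rightarrow> 'o \<Rightarrow> 'o \<Rightarrow> bool" and a :: 'a
  assumes finC: "finite (UNIV :: 'c set)"
    and swo: "strict_weak_order (prec a)"
    and hyp: "\<And>(p :: nat \<Rightarrow> 'c) (\<phi> :: nat \<Rightarrow> nat) ss.
      strict_mono \<phi> \<Longrightarrow> (\<forall>n. is_strategy d a (ss n)) \<Longrightarrow>
      (\<forall>n. guarantee v prec a (pref p (\<phi> (Suc n))) (ss (Suc n))
             \<subset> guarantee v prec a (pref p (\<phi> n)) (ss n)) \<Longrightarrow>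
      v p \<in> (\<Inter>n. guarantee v prec a (pref p (\<phi> n)) (ss n))"
  shows "\<forall>\<gamma> :: 'c list. \<exists>s. is_strategy d a s \<and>
           guarantee v prec a \<gamma> s = best_guarantee d v prec a \<gamma>"
proof
  fix \<gamma> :: "'c list"
  interpret weakly_ordered_player d v prec a
    by unfold_locales (rule swo)
  have "v p \<in> g (pref p k) (ss 0)"
    if "\<forall>n. is_strategy d a (ss n)"
      and "\<forall>n. g (pref p (k + Suc n)) (ss (Suc n)) \<subset> g (pref p (k + n)) (ss n)"
    for p k ss
  proof -
    have "strict_mono (\<lambda>n. k + n)"
      by (simp add: strict_mono_def)
    from hyp[OF this] that have "v p \<in> g (pref p (k + 0)) (ss 0)"
      by blast
    then show ?thesis
      by simp
  qed
  with finC show "\<exists>s. is_strategy d a s \<and> g \<gamma> s = G \<gamma>"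
    by (rule ex_strategy_attaining_best_guarantee)
qed

end
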